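(* There exist absolute constants $\beta,\varepsilon\in(0,0.01)$ such that the following holds for every $n$-vertex graph $G=(V,E)$. Let $p_1<p_2<p_3$ be positions in $[\lfloor\beta n\rfloor]$, and let $P_1,P_2\subseteq[\lfloor\beta n\rfloor]$ be disjoint sets with $|P_1|=|P_2|=l\ge 10000$ and $P_1<P_2<p_1$ (i.e. $\max P_1<\min P_2$ and $\max P_2<p_1$). Put $t_2:=\max P_2$. Let $S\subseteq[\lfloor\beta n\rfloor]\setminus(P_1\cup P_2\cup\{p_2,p_3\})$ with $p_1\in S$, and let $S_2:=S\cup[t_2]\cup\{p_2,p_3\}$. Let $\pi$ be a uniformly random bijection $[n]\to V$ and let $\sigma\colon S\to V$ be any injective map (so that the event $\pi|_S=\sigma$ has positive probability). Then $$\Pr\big[\exists \text{ bijection }\pi'\colon[n]\to V \text{ with } \pi'|_{S_2}=\pi|_{S_2} \text{ such that } p_1,p_2,p_3 \text{ form a dependency path w.r.t. } \pi' \;\big|\; \pi|_S=\sigma\big]\le \frac{1-\varepsilon}{(e\cdot l)^2}.$$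
   Context: For a bijection $\pi\colon[n]\to V$ ($\pi(i)$ is the vertex at position $i$), let $V^*\subseteq V$ be the MIS produced by the sequential greedy algorithm that processes $\pi(1),\dots,\pi(n)$ in this order and adds a vertex iff none of its neighbors was added before. For $v\notin V^*$, its inhibitor $\mathrm{inhib}(v)$ is the neighbor of $v$ in $V^*$ with minimum position. Positions $p_1<p_2<p_3$ form a dependency path (of length 3) w.r.t. $\pi$ if $(\pi(p_1),\pi(p_2),\pi(p_3))$ is a path in $G$, $\pi(p_1),\pi(p_3)\in V^*$, $\pi(p_2)\notin V^*$, and $\pi(p_1)=\mathrm{inhib}(\pi(p_2))$. For sets of integers, $X<Y$ means $\max X<\min Y$, and $[t]=\{1,\dots,t\}$. *)

theory Defs
  imports Complex_Main
begin

text \<open>Graphs: vertex set V (finite set of naturals), edge relation E (symmetric, irreflexive).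
Orderings: bijections pi from positions {1..n} onto V, n = card V, made extensional
(value undefined outside {1..n}) so that the set of orderings is finite.\<close>

definition orderings :: "nat set \<Rightarrow> (nat \<Rightarrow> nat) set" where
  "orderings V = {\<pi>. bij_betw \<pi> {1..card V} V \<and> (\<forall>i. i \<notin> {1..card V} \<longrightarrow> \<pi> i = undefined)}"

primrec greedy_aux :: "(nat \<Rightarrow> nat \<Rightarrow> bool) \<Rightarrow> nat list \<Rightarrow> nat set \<Rightarrow> nat set" where
  "greedy_aux E [] A = A"
| "greedy_aux E (v # vs) A =
     greedy_aux E vs (if \<exists>u\<in>A. E u v then A else insert v A)"

definition greedy_mis :: "(nat \<Rightarrow> nat \<Rightarrow> bool) \<Rightarrow> nat \<Rightarrow> (nat \<Rightarrow> nat) \<Rightarrow> nat set" where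
  "greedy_mis E n \<pi> = greedy_aux E (map \<pi> [1..<n+1]) {}"

definition inhib :: "(nat \<Rightarrow> nat \<Rightarrow> bool) \<Rightarrow> nat \<Rightarrow> (nat \<Rightarrow> nat) \<Rightarrow> nat \<Rightarrow> nat" where
  "inhib E n \<pi> v = \<pi> (LEAST q. q \<in> {1..n} \<and> \<pi> q \<in> greedy_mis E n \<pi> \<and> E (\<pi> q) v)"

definition dep_path :: "(nat \<Rightarrow> nat \<Rightarrow> bool) \<Rightarrow> nat \<Rightarrow> (nat \<Rightarrow> nat) \<Rightarrow> nat \<Rightarrow> nat \<Rightarrow> nat \<Rightarrow> bool" where
  "dep_path E n \<pi> p1 p2 p3 \<longleftrightarrow>
     p1 < p2 \<and> p2 < p3 \<and>
     E (\<pi> p1) (\<pi> p2) \<and> E (\<pi> p2) (\<pi> p3) \<and>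
     \<pi> p1 \<in> greedy_mis E n \<pi> \<and> \<pi> p3 \<in> greedy_mis E n \<pi> \<and>
     \<pi> p2 \<notin> greedy_mis E n \<pi> \<and>
     \<pi> p1 = inhib E n \<pi> (\<pi> p2)"

definition cond_prob :: "nat set \<Rightarrow> ((nat \<Rightarrow> nat) \<Rightarrow> bool) \<Rightarrow> ((nat \<Rightarrow> nat) \<Rightarrow> bool) \<Rightarrow> real" where
  "cond_prob V A B =
     real (card {\<pi> \<in> orderings V. A \<pi> \<and> B \<pi>}) / real (card {\<pi> \<in> orderings V. B \<pi>})"

end

theory Submission
  imports Defs "HOL-Combinatorics.Transposition"
begin

text \<open>Condition on \<open>\<pi>\<close> agreeing with \<open>\<sigma>\<close> on \<open>S\<close> and write \<open>v1 = \<sigma> p1\<close>. If \<open>p1, p2, p3\<close> is a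
  dependency path for some \<open>\<pi>'\<close> agreeing with \<open>\<pi>\<close> on \<open>S2\<close>, then once the positions up to \<open>t2\<close> are
  processed, \<open>v1\<close> and its neighbour \<open>\<pi> p2\<close> are both unblocked, and \<open>\<pi> p3\<close> is an unblocked
  neighbour of \<open>\<pi> p2\<close> not adjacent to \<open>v1\<close>. Given the values at earlier positions, the value at a
  position outside \<open>S\<close> is uniform over the at least \<open>(1 - \<beta>) n\<close> unused vertices. Revealing \<open>\<pi> p3\<close>
  and then \<open>\<pi> p2\<close> therefore bounds the probability by \<open>E[Y] / ((1 - \<beta>) n)\<^sup>2\<close>, where \<open>Y\<close> sums, over
  the candidates \<open>a\<close> for \<open>\<pi> p2\<close>, the number of candidates for \<open>\<pi> p3\<close> behind \<open>a\<close>.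

  \<open>E[Y]\<close> is estimated by revealing the free positions up to \<open>t2\<close> backwards. A vertex placed there
  that is a candidate for \<open>\<pi> p2\<close> blocks \<open>v1\<close> and so kills all \<open>k\<close> of them; one that is a
  candidate for \<open>\<pi> p3\<close> behind \<open>a\<close> kills \<open>a\<close>. Over the \<open>l\<close> free positions of \<open>P2\<close> each number of
  end candidates decays like \<open>x (1 - x / n)\<^sup>l \<le> n / (e l)\<close>, and over those of \<open>P1\<close> so does the
  number of middle candidates, which gives \<open>(n / (e l))\<^sup>2\<close>. In each step the sum also loses the
  fraction \<open>k / n\<close> of itself, a loss quadratic in the sum; the concave transform \<open>y / (1 + g y)\<close>
  keeps track of it, and this second-order gain is what yields the factor \<open>1 - \<epsilon>\<close>.\<close>

section \<open>Greedy prefixes\<close>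

definition greedy_prefix :: "(nat \<Rightarrow> nat \<Rightarrow> bool) \<Rightarrow> (nat \<Rightarrow> nat) \<Rightarrow> nat \<Rightarrow> nat set" where
  "greedy_prefix E \<pi> q = greedy_aux E (map \<pi> [1..<q]) {}"

lemma greedy_aux_append: "greedy_aux E (xs @ ys) A = greedy_aux E ys (greedy_aux E xs A)"
  by (induction xs arbitrary: A) auto

lemma greedy_aux_subset: "greedy_aux E xs A \<subseteq> A \<union> set xs"
proof (induction xs arbitrary: A)
  case (Cons x xs)
  let ?B = "if \<exists>u\<in>A. E u x then A else insert x A"
  have "greedy_aux E xs ?B \<subseteq> ?B \<union> set xs" by (rule Cons.IH)
  moreover have "?B \<subseteq> insert x A" by auto
  ultimately show ?case unfolding greedy_aux.simps set_simps by blast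
qed simp

lemma greedy_aux_independent:
  assumes sym: "\<forall>u v. E u v \<longrightarrow> E v u" and irr: "\<forall>v. \<not> E v v"
  shows "\<forall>u\<in>A. \<forall>w\<in>A. \<not> E u w \<Longrightarrow> \<forall>u\<in>greedy_aux E xs A. \<forall>w\<in>greedy_aux E xs A. \<not> E u w"
proof (induction xs arbitrary: A)
  case (Cons x xs)
  let ?B = "if \<exists>u\<in>A. E u x then A else insert x A"
  have "\<forall>u\<in>?B. \<forall>w\<in>?B. \<not> E u w"
  proof (cases "\<exists>u\<in>A. E u x")
    case False
    then have "\<forall>w\<in>A. \<not> E x w" using sym by blast
    then show ?thesis using False Cons.prems irr by auto
  qed (use Cons.prems in simp)
  then show ?case unfolding greedy_aux.simps by (rule Cons.IH)
qed simp

lemma greedy_prefix_Suc: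
  assumes "1 \<le> q"
  shows "greedy_prefix E \<pi> (Suc q) =
    (if \<exists>u\<in>greedy_prefix E \<pi> q. E u (\<pi> q) then greedy_prefix E \<pi> q else insert (\<pi> q) (greedy_prefix E \<pi> q))"
proof -
  have "map \<pi> [1..<Suc q] = map \<pi> [1..<q] @ [\<pi> q]" using assms by simp
  then show ?thesis unfolding greedy_prefix_def by (simp only: greedy_aux_append greedy_aux.simps)
qed

lemma greedy_prefix_cong:
  assumes "\<And>i. i \<in> {1..<q} \<Longrightarrow> \<pi> i = \<pi>' i"
  shows "greedy_prefix E \<pi> q = greedy_prefix E \<pi>' q"
proof -
  have "map \<pi> [1..<q] = map \<pi>' [1..<q]" by (rule map_cong) (auto intro: assms)
  then show ?thesis unfolding greedy_prefix_def by (rule arg_cong)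
qed

lemma greedy_prefix_mono:
  assumes "q \<le> q'"
  shows "greedy_prefix E \<pi> q \<subseteq> greedy_prefix E \<pi> q'"
proof (rule lift_Suc_mono_le[OF _ assms])
  show "greedy_prefix E \<pi> n \<subseteq> greedy_prefix E \<pi> (Suc n)" for n
  proof (cases "n = 0")
    case True
    then show ?thesis by (simp add: greedy_prefix_def)
  next
    case False
    then show ?thesis by (auto simp: greedy_prefix_Suc)
  qed
qed

lemma greedy_prefix_subset_image: "greedy_prefix E \<pi> q \<subseteq> \<pi> ` {1..<q}"
  using greedy_aux_subset[of E "map \<pi> [1..<q]" "{}"] unfolding greedy_prefix_def by simp

lemma greedy_mis_eq_prefix: "greedy_mis E n \<pi> = greedy_prefix E \<pi> (Suc n)"
  unfolding greedy_mis_def greedy_prefix_def by simp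

section \<open>Real estimates\<close>

definition psi :: "real \<Rightarrow> real \<Rightarrow> real" where
  "psi g y = y / (1 + g * y)"

lemma psi_0 [simp]: "psi 0 y = y"
  by (simp add: psi_def)

lemma psi_nonneg: "g \<ge> 0 \<Longrightarrow> y \<ge> 0 \<Longrightarrow> psi g y \<ge> 0"
  by (simp add: psi_def)

lemma psi_diff:
  "1 + g * y > 0 \<Longrightarrow> 1 + g * z > 0 \<Longrightarrow> psi g y - psi g z = (y - z) / ((1 + g * y) * (1 + g * z))"
  unfolding psi_def by (simp add: field_simps)

lemma psi_mono:
  assumes "g \<ge> 0" "0 \<le> y" "y \<le> z"
  shows "psi g y \<le> psi g z"
proof -
  have pos: "1 + g * y > 0" "1 + g * z > 0" using assms by (auto intro: add_pos_nonneg)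
  have "0 \<le> (z - y) / ((1 + g * z) * (1 + g * y))" using pos assms by simp
  with psi_diff[OF pos(2,1)] show ?thesis by linarith
qed

lemma psi_tangent:
  assumes "g \<ge> 0" "y \<ge> 0" "z \<ge> 0"
  shows "psi g y \<le> psi g z + (y - z) / (1 + g * z)^2"
proof -
  define A B where "A = 1 + g * y" and "B = 1 + g * z"
  have pos: "A > 0" "B > 0" using assms unfolding A_def B_def by (auto intro: add_pos_nonneg)
  have "(y - z) / (A * B) \<le> (y - z) / B^2"
  proof (cases "y \<ge> z")
    case True
    then have "B^2 \<le> A * B" using pos assms unfolding A_def B_def power2_eq_square
      by (intro mult_right_mono) (auto intro: mult_left_mono)
    then show ?thesis using True pos by (intro divide_left_mono) auto
  next
    case False
    then have "A * B \<le> B^2" using pos assms unfolding A_def B_def power2_eq_square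
      by (intro mult_right_mono) (auto intro: mult_left_mono)
    then show ?thesis using False pos by (intro divide_left_mono_neg) auto
  qed
  with psi_diff[of g y z] pos show ?thesis unfolding A_def B_def by simp
qed

lemma psi_mean_le:
  assumes "finite P" "P \<noteq> {}" "g \<ge> 0" "\<And>x. x \<in> P \<Longrightarrow> f x \<ge> 0"
  shows "(\<Sum>x\<in>P. psi g (f x)) / card P \<le> psi g ((\<Sum>x\<in>P. f x) / card P)"
proof -
  define z where "z = (\<Sum>x\<in>P. f x) / card P"
  have card_pos: "real (card P) > 0" using assms by auto
  have "z \<ge> 0" unfolding z_def using assms by (simp add: sum_nonneg)
  then have "(\<Sum>x\<in>P. psi g (f x)) \<le> (\<Sum>x\<in>P. psi g z + (f x - z) / (1 + g * z)^2)"
    using assms by (intro sum_mono psi_tangent) auto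
  also have "\<dots> = card P * psi g z + ((\<Sum>x\<in>P. f x) - card P * z) / (1 + g * z)^2"
    by (simp add: sum.distrib sum_subtractf sum_divide_distrib[symmetric])
  also have "(\<Sum>x\<in>P. f x) - card P * z = 0" unfolding z_def using card_pos by simp
  finally show ?thesis unfolding z_def[symmetric] using card_pos by (simp add: divide_le_eq mult.commute)
qed

lemma psi_absorb_quadratic:
  assumes "g \<ge> 0" "d \<ge> 0" "y \<ge> 0" "y - d * y^2 \<ge> 0"
  shows "psi g (y - d * y^2) \<le> psi (g + d) y"
proof -
  have pos: "1 + g * (y - d * y^2) > 0" "1 + (g + d) * y > 0"
    using assms by (auto intro: add_pos_nonneg)
  have "y * (1 + g * (y - d * y^2)) - (y - d * y^2) * (1 + (g + d) * y) = d^2 * y^3"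
    by (simp add: algebra_simps power2_eq_square power3_eq_cube)
  moreover have "d^2 * y^3 \<ge> 0" using assms by simp
  ultimately have "(y - d * y^2) * (1 + (g + d) * y) \<le> y * (1 + g * (y - d * y^2))" by linarith
  then show ?thesis unfolding psi_def using pos by (simp add: divide_simps)
qed

lemma decay_term_le:
  fixes n r :: nat and x :: real
  assumes "n > 0" "r \<ge> 1" "0 \<le> x" "x \<le> n"
  shows "x * (1 - x / n)^r \<le> n / (exp 1 * r)"
proof -
  define t where "t = x / n"
  have t: "0 \<le> t" "t \<le> 1" using assms by (auto simp: t_def divide_le_eq)
  have "(1 - t)^r \<le> exp (- t)^r"
    by (rule power_mono) (use exp_ge_add_one_self[of "-t"] t in auto)
  also have "\<dots> = exp (- (t * r))" by (simp add: exp_of_nat_mult[symmetric] mult.commute)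
  finally have decay: "(1 - t)^r \<le> exp (- (t * r))" .
  have "t * r \<le> exp (t * r - 1)" using exp_ge_add_one_self[of "t * r - 1"] by simp
  then have "t * r * exp (- (t * r)) \<le> exp (t * r - 1) * exp (- (t * r))"
    by (simp add: mult_right_mono)
  also have "\<dots> = exp (- 1)" by (simp add: exp_add[symmetric])
  finally have peak: "t * exp (- (t * r)) \<le> exp (- 1) / r"
    using assms(2) by (simp add: le_divide_eq mult.commute mult.left_commute)
  have "x * (1 - x / n)^r = n * (t * (1 - t)^r)" using assms(1) by (simp add: t_def)
  also have "\<dots> \<le> n * (t * exp (- (t * r)))" using decay t by (intro mult_left_mono) auto
  also have "\<dots> \<le> n * (exp (- 1) / r)" using peak by (intro mult_left_mono) auto
  also have "\<dots> = n / (exp 1 * r)" by (simp add: exp_minus field_simps)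
  finally show ?thesis .
qed

text \<open>Maximising over \<open>x \<le> k\<close> makes the bound monotone in \<open>k\<close>.\<close>

definition max_decay :: "nat \<Rightarrow> nat \<Rightarrow> nat \<Rightarrow> real" where
  "max_decay n r k = Max ((\<lambda>x. real x * (1 - real x / n)^r) ` {0..k})"

lemma max_decay_ge: "x \<le> k \<Longrightarrow> real x * (1 - real x / n)^r \<le> max_decay n r k"
  unfolding max_decay_def by (rule Max_ge) auto

lemma max_decay_attained: "\<exists>x\<le>k. max_decay n r k = real x * (1 - real x / n)^r"
proof -
  have "max_decay n r k \<in> (\<lambda>x. real x * (1 - real x / n)^r) ` {0..k}"
    unfolding max_decay_def by (rule Max_in) auto
  then show ?thesis by auto
qed

lemma max_decay_nonneg: "0 \<le> max_decay n r k"
  using max_decay_ge[of 0 k n r] by simp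

lemma max_decay_mono: "k \<le> k' \<Longrightarrow> max_decay n r k \<le> max_decay n r k'"
  using max_decay_attained[of k n r] max_decay_ge[of _ k' n r] by force

lemma max_decay_empty [simp]: "max_decay n r 0 = 0"
  using max_decay_attained[of 0 n r] by auto

lemma max_decay_no_steps [simp]: "max_decay n 0 k = k"
  using max_decay_attained[of k n 0] max_decay_ge[of k k n 0] by auto

lemma max_decay_Suc_ge:
  assumes "k \<le> n"
  shows "(1 - k / n) * max_decay n r k \<le> max_decay n (Suc r) k"
proof -
  obtain x where x: "x \<le> k" "max_decay n r k = real x * (1 - real x / n)^r"
    using max_decay_attained by blast
  have "0 \<le> real x * (1 - real x / n)^r"
    using x assms by (cases "n = 0") (auto simp: divide_le_eq)
  moreover have "1 - k / n \<le> 1 - x / n" using x by (simp add: divide_right_mono)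
  ultimately have "(1 - k / n) * max_decay n r k \<le> (1 - x / n) * (real x * (1 - real x / n)^r)"
    unfolding x(2) by (rule mult_right_mono[rotated])
  also have "\<dots> = real x * (1 - real x / n)^Suc r" by simp
  also have "\<dots> \<le> max_decay n (Suc r) k" using x(1) by (rule max_decay_ge)
  finally show ?thesis .
qed

lemma max_decay_le:
  assumes "n > 0" "r \<ge> 1" "k \<le> n"
  shows "max_decay n r k \<le> n / (exp 1 * r)"
proof -
  obtain x where "x \<le> k" "max_decay n r k = real x * (1 - real x / n)^r"
    using max_decay_attained by blast
  then show ?thesis using decay_term_le assms by simp
qed

lemma remaining_fraction_le:
  fixes k p n :: nat
  assumes "k \<le> p" "0 < p" "p \<le> n"
  shows "real (p - k) / p \<le> 1 - k / n"
proof -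
  have "real (p - k) / p = 1 - k / p" using assms by (simp add: field_simps of_nat_diff)
  moreover have "real k / n \<le> k / p" using assms by (intro divide_left_mono) auto
  ultimately show ?thesis by linarith
qed

lemma remaining_fraction_product_le:
  fixes k l p n :: nat
  assumes "k + l \<le> p" "0 < p" "p \<le> n"
  shows "real (p - (k + l)) / p \<le> (1 - k / n) * (1 - l / n)"
proof -
  have "real (p - (k + l)) / p \<le> 1 - (k + l) / n" using remaining_fraction_le[OF assms] by simp
  also have "\<dots> \<le> (1 - k / n) * (1 - l / n)" using assms by (simp add: field_simps)
  finally show ?thesis .
qed

lemma sum_if_mem_zero:
  fixes c :: real
  assumes "finite P" "K \<subseteq> P"
  shows "(\<Sum>x\<in>P. if x \<in> K then 0 else c) = (card P - card K) * c"
proof -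
  have "(\<Sum>x\<in>P. if x \<in> K then 0 else c) = (\<Sum>x\<in>P - K. c)"
    using assms(1) by (simp add: sum.If_cases Diff_eq)
  also have "\<dots> = (card P - card K) * c"
    using assms by (simp add: card_Diff_subset finite_subset)
  finally show ?thesis .
qed

section \<open>Orderings with prescribed values on \<open>S\<close>\<close>

lemma sum_pairs_pick_first:
  fixes f :: "'a \<Rightarrow> real"
  assumes "finite W" "U \<subseteq> W" "a \<in> U"
  shows "(\<Sum>x\<in>W. \<Sum>y\<in>W. if x \<in> U \<and> y \<in> U \<and> a = x then f x / card U else 0) = f a"
proof -
  have "finite U" "card U > 0" using assms finite_subset card_gt_0_iff by blast+
  then have "(\<Sum>y\<in>W. if x \<in> U \<and> y \<in> U \<and> a = x then f x / card U else 0) = (if x = a then f a else 0)" for x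
    using assms by (auto simp: sum.If_cases Int_absorb1)
  then show ?thesis using assms by auto
qed

lemma sum_pairs_pick_second:
  fixes f :: "'a \<Rightarrow> real"
  assumes "finite W" "U \<subseteq> W" "a \<in> U"
  shows "(\<Sum>x\<in>W. \<Sum>y\<in>W. if x \<in> U \<and> y \<in> U \<and> a = y then f x / card U else 0) = (\<Sum>x\<in>U. f x) / card U"
proof -
  have "(\<Sum>y\<in>W. if x \<in> U \<and> y \<in> U \<and> a = y then f x / card U else 0)
      = (\<Sum>y\<in>W. if a = y then (if x \<in> U then f x / card U else 0) else 0)" for x
    using assms(3) by (intro sum.cong) auto
  then show ?thesis
    using assms by (simp add: subset_iff sum.If_cases Int_absorb1 sum_divide_distrib)
qed

locale conditioned_orderings =
  fixes V :: "nat set" and S :: "nat set" and \<sigma> :: "nat \<Rightarrow> nat"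
  assumes finite_V: "finite V" and S_positions: "S \<subseteq> {1..card V}"
begin

definition Omega :: "(nat \<Rightarrow> nat) set" where
  "Omega = {\<pi> \<in> orderings V. \<forall>i\<in>S. \<pi> i = \<sigma> i}"

definition unused :: "(nat \<Rightarrow> nat) \<Rightarrow> nat set \<Rightarrow> nat set" where
  "unused \<pi> J = V - \<pi> ` J - \<sigma> ` S"

text \<open>The guard keeps the junk value \<open>undefined\<close> outside the positions, as \<^const>\<open>orderings\<close> requires.\<close>

definition swap_values :: "nat \<Rightarrow> nat \<Rightarrow> (nat \<Rightarrow> nat) \<Rightarrow> nat \<Rightarrow> nat" where
  "swap_values x y \<pi> i = (if i \<in> {1..card V} then transpose x y (\<pi> i) else \<pi> i)"

lemma finite_Omega: "finite Omega"
proof (rule finite_subset)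
  show "Omega \<subseteq> {\<pi>. \<forall>i. (i \<in> {1..card V} \<longrightarrow> \<pi> i \<in> V) \<and> (i \<notin> {1..card V} \<longrightarrow> \<pi> i = undefined)}"
    unfolding Omega_def orderings_def by (auto dest: bij_betwE)
  show "finite \<dots>" by (rule finite_set_of_finite_funs) (auto simp: finite_V)
qed

lemma OmegaD:
  assumes "\<pi> \<in> Omega"
  shows "bij_betw \<pi> {1..card V} V" "inj_on \<pi> {1..card V}" "\<pi> ` {1..card V} = V"
    "\<And>i. i \<in> S \<Longrightarrow> \<pi> i = \<sigma> i" "\<And>i. i \<notin> {1..card V} \<Longrightarrow> \<pi> i = undefined"
  using assms unfolding Omega_def orderings_def bij_betw_def by auto

lemma Omega_image_S: "\<pi> \<in> Omega \<Longrightarrow> \<pi> ` S = \<sigma> ` S"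
  using OmegaD(4) by (auto simp: image_def)

lemma finite_unused: "finite (unused \<pi> J)"
  unfolding unused_def using finite_V by simp

lemma unused_subset: "unused \<pi> J \<subseteq> V - \<sigma> ` S"
  unfolding unused_def by auto

lemma unused_cong: "(\<And>i. i \<in> J \<Longrightarrow> \<pi> i = \<pi>' i) \<Longrightarrow> unused \<pi> J = unused \<pi>' J"
  unfolding unused_def by (metis image_cong)

lemma unused_antimono: "J \<subseteq> J' \<Longrightarrow> unused \<pi> J' \<subseteq> unused \<pi> J"
  unfolding unused_def by auto

lemma card_unused_le: "card (unused \<pi> J) \<le> card V"
  unfolding unused_def by (rule card_mono[OF finite_V]) auto

lemma card_unused_ge:
  assumes "\<pi> \<in> Omega" "finite J"
  shows "card V - card (J \<union> S) \<le> card (unused \<pi> J)"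
proof -
  have "finite S" using S_positions finite_subset by blast
  have "card V - card (J \<union> S) \<le> card V - card (\<pi> ` (J \<union> S))"
    by (rule diff_le_mono2, rule card_image_le) (use assms(2) \<open>finite S\<close> in simp)
  also have "\<dots> \<le> card (V - \<pi> ` (J \<union> S))"
    by (rule diff_card_le_card_Diff) (use assms(2) \<open>finite S\<close> in simp)
  also have "V - \<pi> ` (J \<union> S) = unused \<pi> J"
    unfolding unused_def using Omega_image_S[OF assms(1)] by auto
  finally show ?thesis .
qed

lemma free_position_unused:
  assumes "\<pi> \<in> Omega" "q \<in> {1..card V}" "q \<notin> S" "q \<notin> J" "J \<subseteq> {1..card V}"
  shows "\<pi> q \<in> unused \<pi> J"
proof -
  have inj: "inj_on \<pi> {1..card V}" and "\<pi> q \<in> V" using OmegaD[OF assms(1)] assms(2) by auto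
  moreover have "\<pi> q \<notin> \<pi> ` J" "\<pi> q \<notin> \<pi> ` S"
    using inj assms(2-5) S_positions by (auto dest: inj_onD)
  ultimately show ?thesis unfolding unused_def using Omega_image_S[OF assms(1)] by auto
qed

lemma swap_values_involutory [simp]: "swap_values x y (swap_values x y \<pi>) = \<pi>"
  unfolding swap_values_def by auto

lemma swap_values_Omega:
  assumes "\<pi> \<in> Omega" "x \<in> V - \<sigma> ` S" "y \<in> V - \<sigma> ` S"
  shows "swap_values x y \<pi> \<in> Omega"
proof -
  have "bij_betw (transpose x y \<circ> \<pi>) {1..card V} V"
    using OmegaD(1)[OF assms(1)] assms(2,3) by (auto intro: bij_betw_trans)
  then have "bij_betw (swap_values x y \<pi>) {1..card V} V"
    by (rule bij_betw_cong[THEN iffD1, rotated]) (simp add: swap_values_def)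
  moreover have "swap_values x y \<pi> i = \<sigma> i" if "i \<in> S" for i
    using that OmegaD(4)[OF assms(1)] S_positions assms(2,3) by (auto simp: swap_values_def transpose_def)
  ultimately show ?thesis
    using OmegaD(5)[OF assms(1)] unfolding Omega_def orderings_def by (auto simp: swap_values_def)
qed

lemma bij_betw_swap_values:
  "x \<in> V - \<sigma> ` S \<Longrightarrow> y \<in> V - \<sigma> ` S \<Longrightarrow> bij_betw (swap_values x y) Omega Omega"
  by (rule bij_betw_byWitness[where f'="swap_values x y"]) (auto simp: swap_values_Omega)

lemma swap_values_fixes:
  assumes "x \<in> unused \<pi> J" "y \<in> unused \<pi> J" "J \<subseteq> {1..card V}" "i \<in> J"
  shows "swap_values x y \<pi> i = \<pi> i"
  using assms unfolding unused_def swap_values_def transpose_def by auto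

lemma sum_Omega_swap_free_values:
  assumes q: "q \<in> {1..card V}" and J: "J \<subseteq> {1..card V}"
    and xy: "x \<in> V - \<sigma> ` S" "y \<in> V - \<sigma> ` S"
    and local: "\<And>\<pi> \<pi>'. (\<And>i. i \<in> J \<Longrightarrow> \<pi> i = \<pi>' i) \<Longrightarrow> H \<pi> = H \<pi>'"
  shows "(\<Sum>\<pi>\<in>Omega. if x \<in> unused \<pi> J \<and> y \<in> unused \<pi> J \<and> \<pi> q = y then H \<pi> else 0)
       = (\<Sum>\<pi>\<in>Omega. if x \<in> unused \<pi> J \<and> y \<in> unused \<pi> J \<and> \<pi> q = x then H \<pi> else 0)"
    (is "(\<Sum>\<pi>\<in>Omega. ?F y \<pi>) = (\<Sum>\<pi>\<in>Omega. ?F x \<pi>)")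
proof -
  have "?F y (swap_values x y \<pi>) = ?F x \<pi>" for \<pi>
  proof (cases "x \<in> unused \<pi> J \<and> y \<in> unused \<pi> J")
    case True
    then have fixes_J: "\<And>i. i \<in> J \<Longrightarrow> swap_values x y \<pi> i = \<pi> i" using swap_values_fixes J by blast
    then have "unused (swap_values x y \<pi>) J = unused \<pi> J" by (rule unused_cong)
    moreover have "H (swap_values x y \<pi>) = H \<pi>" using fixes_J by (rule local)
    moreover have "swap_values x y \<pi> q = y \<longleftrightarrow> \<pi> q = x"
      using q by (auto simp: swap_values_def transpose_eq_iff)
    ultimately show ?thesis by simp
  next
    case False
    have "\<not> (x \<in> unused (swap_values x y \<pi>) J \<and> y \<in> unused (swap_values x y \<pi>) J)"
    proof
      assume "x \<in> unused (swap_values x y \<pi>) J \<and> y \<in> unused (swap_values x y \<pi>) J"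
      then have "unused (swap_values x y (swap_values x y \<pi>)) J = unused (swap_values x y \<pi>) J"
        using swap_values_fixes J by (intro unused_cong) blast
      then show False using \<open>x \<in> unused (swap_values x y \<pi>) J \<and> _\<close> False by simp
    qed
    then show ?thesis using False by auto
  qed
  then show ?thesis
    using sum.reindex_bij_betw[OF bij_betw_swap_values[OF xy], of "?F y"] by simp
qed

text \<open>Swapping two unused values fixes \<open>\<pi>\<close> on \<open>J\<close>, so given \<open>\<pi>\<close> on \<open>J\<close> the value at a further
  free position \<open>q\<close> is uniformly distributed over the unused vertices.\<close>

lemma sum_Omega_free_position:
  assumes q: "q \<in> {1..card V}" "q \<notin> S" "q \<notin> J" and J: "J \<subseteq> {1..card V}"
    and local: "\<And>\<pi> \<pi>' x. (\<And>i. i \<in> J \<Longrightarrow> \<pi> i = \<pi>' i) \<Longrightarrow> G \<pi> x = G \<pi>' x"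
  shows "(\<Sum>\<pi>\<in>Omega. G \<pi> (\<pi> q)) = (\<Sum>\<pi>\<in>Omega. (\<Sum>x\<in>unused \<pi> J. G \<pi> x) / card (unused \<pi> J))"
proof -
  define W where "W = V - \<sigma> ` S"
  have "finite W" unfolding W_def using finite_V by simp
  define F where "F z x y \<pi> = (if x \<in> unused \<pi> J \<and> y \<in> unused \<pi> J \<and> \<pi> q = z
     then G \<pi> x / card (unused \<pi> J) else 0)" for z x y \<pi>
  have U: "unused \<pi> J \<subseteq> W" for \<pi> using unused_subset unfolding W_def by auto
  have q_unused: "\<pi> q \<in> unused \<pi> J" if "\<pi> \<in> Omega" for \<pi>
    using free_position_unused[OF that q(1,2,3) J] .
  have at_q: "G \<pi> (\<pi> q) = (\<Sum>x\<in>W. \<Sum>y\<in>W. F x x y \<pi>)" if "\<pi> \<in> Omega" for \<pi>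
    unfolding F_def using sum_pairs_pick_first[OF \<open>finite W\<close> U q_unused[OF that]] by simp
  have mean: "(\<Sum>x\<in>unused \<pi> J. G \<pi> x) / card (unused \<pi> J) = (\<Sum>x\<in>W. \<Sum>y\<in>W. F y x y \<pi>)"
    if "\<pi> \<in> Omega" for \<pi>
    unfolding F_def using sum_pairs_pick_second[OF \<open>finite W\<close> U q_unused[OF that]] by simp
  have exchange: "(\<Sum>\<pi>\<in>Omega. F x x y \<pi>) = (\<Sum>\<pi>\<in>Omega. F y x y \<pi>)" if "x \<in> W" "y \<in> W" for x y
    unfolding F_def
  proof (rule sum_Omega_swap_free_values[OF q(1) J, symmetric])
    show "x \<in> V - \<sigma> ` S" "y \<in> V - \<sigma> ` S" using that unfolding W_def by auto
    fix \<pi> \<pi>' :: "nat \<Rightarrow> nat"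
    assume "\<And>i. i \<in> J \<Longrightarrow> \<pi> i = \<pi>' i"
    then show "G \<pi> x / card (unused \<pi> J) = G \<pi>' x / card (unused \<pi>' J)"
      using local[of \<pi> \<pi>'] unused_cong[of J \<pi> \<pi>'] by simp
  qed
  have "(\<Sum>\<pi>\<in>Omega. G \<pi> (\<pi> q)) = (\<Sum>\<pi>\<in>Omega. \<Sum>x\<in>W. \<Sum>y\<in>W. F x x y \<pi>)"
    using at_q by simp
  also have "\<dots> = (\<Sum>x\<in>W. \<Sum>y\<in>W. \<Sum>\<pi>\<in>Omega. F x x y \<pi>)"
    by (simp add: sum.swap[of _ Omega] sum.swap[of _ Omega W])
  also have "\<dots> = (\<Sum>x\<in>W. \<Sum>y\<in>W. \<Sum>\<pi>\<in>Omega. F y x y \<pi>)"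
    by (rule sum.cong[OF refl], rule sum.cong[OF refl], rule exchange)
  also have "\<dots> = (\<Sum>\<pi>\<in>Omega. \<Sum>x\<in>W. \<Sum>y\<in>W. F y x y \<pi>)"
    by (simp add: sum.swap[of _ Omega] sum.swap[of _ Omega W])
  also have "\<dots> = (\<Sum>\<pi>\<in>Omega. (\<Sum>x\<in>unused \<pi> J. G \<pi> x) / card (unused \<pi> J))"
    using mean by simp
  finally show ?thesis .
qed

lemma sum_psi_free_position_le:
  assumes q: "q \<in> {1..card V}" "q \<notin> S" and g: "g \<ge> 0"
    and local: "\<And>\<pi> \<pi>'. (\<And>i. i \<in> {1..q} \<Longrightarrow> \<pi> i = \<pi>' i) \<Longrightarrow> F \<pi> = F \<pi>'"
    and nonneg: "\<And>\<pi>. F \<pi> \<ge> 0"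
    and mean_le: "\<And>\<pi>. \<pi> \<in> Omega \<Longrightarrow>
      (\<Sum>x\<in>unused \<pi> {1..<q}. F (\<pi>(q := x))) / card (unused \<pi> {1..<q}) \<le> B \<pi>"
  shows "(\<Sum>\<pi>\<in>Omega. psi g (F \<pi>)) \<le> (\<Sum>\<pi>\<in>Omega. psi g (B \<pi>))"
proof -
  let ?G = "\<lambda>\<pi> x. psi g (F (\<pi>(q := x)))"
  have "(\<Sum>\<pi>\<in>Omega. psi g (F \<pi>)) = (\<Sum>\<pi>\<in>Omega. ?G \<pi> (\<pi> q))" by simp
  also have "\<dots> = (\<Sum>\<pi>\<in>Omega. (\<Sum>x\<in>unused \<pi> {1..<q}. ?G \<pi> x) / card (unused \<pi> {1..<q}))"
  proof (rule sum_Omega_free_position)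
    fix \<pi> \<pi>' :: "nat \<Rightarrow> nat" and x
    assume "\<And>i. i \<in> {1..<q} \<Longrightarrow> \<pi> i = \<pi>' i"
    then have "F (\<pi>(q := x)) = F (\<pi>'(q := x))" by (intro local) auto
    then show "?G \<pi> x = ?G \<pi>' x" by simp
  qed (use q in auto)
  also have "\<dots> \<le> (\<Sum>\<pi>\<in>Omega. psi g (B \<pi>))"
  proof (rule sum_mono)
    fix \<pi> assume \<pi>: "\<pi> \<in> Omega"
    let ?P = "unused \<pi> {1..<q}"
    have "\<pi> q \<in> ?P" by (rule free_position_unused[OF \<pi> q]) (use q in auto)
    then have "?P \<noteq> {}" by auto
    then have "(\<Sum>x\<in>?P. ?G \<pi> x) / card ?P \<le> psi g ((\<Sum>x\<in>?P. F (\<pi>(q := x))) / card ?P)"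
      using finite_unused g nonneg by (intro psi_mean_le) auto
    also have "\<dots> \<le> psi g (B \<pi>)"
      using g mean_le[OF \<pi>] nonneg by (intro psi_mono divide_nonneg_nonneg sum_nonneg) auto
    finally show "(\<Sum>x\<in>?P. ?G \<pi> x) / card ?P \<le> psi g (B \<pi>)" .
  qed
  finally show ?thesis .
qed

end
section \<open>Candidates for the middle and the end of a dependency path\<close>

locale path_candidates = conditioned_orderings V S \<sigma> for V S \<sigma> +
  fixes E :: "nat \<Rightarrow> nat \<Rightarrow> bool" and p1 :: nat
  assumes sym_E: "\<forall>u v. E u v \<longrightarrow> E v u" and irrefl_E: "\<forall>v. \<not> E v v"
begin

definition v1 :: nat where
  "v1 = \<sigma> p1"

definition unblocked :: "(nat \<Rightarrow> nat) \<Rightarrow> nat \<Rightarrow> nat \<Rightarrow> bool" where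
  "unblocked \<pi> q u \<longleftrightarrow> (\<forall>w\<in>greedy_prefix E \<pi> q. \<not> E w u)"

text \<open>Once positions \<open>1..<q\<close> are processed, \<open>mids \<pi> q\<close> holds the unused vertices that may still
  play \<open>\<pi> p2\<close> (unblocked neighbours of \<open>v1\<close>, as long as \<open>v1\<close> is unblocked), and \<open>ends \<pi> q a\<close>
  those that may still play \<open>\<pi> p3\<close> behind \<open>\<pi> p2 = a\<close>.\<close>

definition mids :: "(nat \<Rightarrow> nat) \<Rightarrow> nat \<Rightarrow> nat set" where
  "mids \<pi> q = (if unblocked \<pi> q v1 then {a \<in> unused \<pi> {1..<q}. E v1 a \<and> unblocked \<pi> q a} else {})"

definition ends :: "(nat \<Rightarrow> nat) \<Rightarrow> nat \<Rightarrow> nat \<Rightarrow> nat set" where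
  "ends \<pi> q a = {c \<in> unused \<pi> {1..<q}. E a c \<and> \<not> E v1 c \<and> unblocked \<pi> q c}"

definition potential :: "nat \<Rightarrow> (nat \<Rightarrow> nat) \<Rightarrow> nat \<Rightarrow> real" where
  "potential r \<pi> q = (\<Sum>a\<in>mids \<pi> q. max_decay (card V) r (card (ends \<pi> q a)))"

lemma unblocked_cong: "(\<And>i. i \<in> {1..<q} \<Longrightarrow> \<pi> i = \<pi>' i) \<Longrightarrow> unblocked \<pi> q = unblocked \<pi>' q"
  unfolding unblocked_def using greedy_prefix_cong by metis

lemma mids_cong: "(\<And>i. i \<in> {1..<q} \<Longrightarrow> \<pi> i = \<pi>' i) \<Longrightarrow> mids \<pi> q = mids \<pi>' q"
  unfolding mids_def using unblocked_cong[of q \<pi> \<pi>'] unused_cong[of "{1..<q}" \<pi> \<pi>'] by simp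

lemma ends_cong: "(\<And>i. i \<in> {1..<q} \<Longrightarrow> \<pi> i = \<pi>' i) \<Longrightarrow> ends \<pi> q a = ends \<pi>' q a"
  unfolding ends_def using unblocked_cong[of q \<pi> \<pi>'] unused_cong[of "{1..<q}" \<pi> \<pi>'] by simp

lemma potential_cong: "(\<And>i. i \<in> {1..<q} \<Longrightarrow> \<pi> i = \<pi>' i) \<Longrightarrow> potential r \<pi> q = potential r \<pi>' q"
  unfolding potential_def using mids_cong[of q \<pi> \<pi>'] ends_cong[of q \<pi> \<pi>'] by simp

lemma mids_subset_unused: "mids \<pi> q \<subseteq> unused \<pi> {1..<q}"
  unfolding mids_def by auto

lemma ends_subset_unused: "ends \<pi> q a \<subseteq> unused \<pi> {1..<q}"
  unfolding ends_def by auto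

lemma mids_ends_disjoint: "mids \<pi> q \<inter> ends \<pi> q a = {}"
  unfolding mids_def ends_def by auto

lemma finite_mids: "finite (mids \<pi> q)"
  using finite_subset[OF mids_subset_unused finite_unused] .

lemma finite_ends: "finite (ends \<pi> q a)"
  using finite_subset[OF ends_subset_unused finite_unused] .

lemma card_mids_le: "card (mids \<pi> q) \<le> card V"
  using card_mono[OF finite_unused mids_subset_unused] card_unused_le le_trans by blast

lemma card_ends_le: "card (ends \<pi> q a) \<le> card V"
  using card_mono[OF finite_unused ends_subset_unused] card_unused_le le_trans by blast

lemma unblocked_Suc: "unblocked \<pi> (Suc q) u \<Longrightarrow> unblocked \<pi> q u"
  using greedy_prefix_mono[of q "Suc q" E \<pi>] unfolding unblocked_def by auto

lemma unused_Suc: "unused \<pi> {1..<Suc q} \<subseteq> unused \<pi> {1..<q}"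
  by (rule unused_antimono) auto

lemma mids_Suc_subset: "mids \<pi> (Suc q) \<subseteq> mids \<pi> q"
  using unblocked_Suc[of \<pi> q] unused_Suc[of \<pi> q] unfolding mids_def by auto

lemma ends_Suc_subset: "ends \<pi> (Suc q) a \<subseteq> ends \<pi> q a"
  using unblocked_Suc[of \<pi> q] unused_Suc[of \<pi> q] unfolding ends_def by auto

lemma unblocked_joins_prefix: "1 \<le> q \<Longrightarrow> unblocked \<pi> q (\<pi> q) \<Longrightarrow> \<pi> q \<in> greedy_prefix E \<pi> (Suc q)"
  unfolding unblocked_def by (simp add: greedy_prefix_Suc)

lemma mids_Suc_placed_mid:
  assumes "1 \<le> q" "\<pi> q \<in> mids \<pi> q"
  shows "mids \<pi> (Suc q) = {}"
proof -
  have "unblocked \<pi> q (\<pi> q)" "E v1 (\<pi> q)" using assms(2) unfolding mids_def by (auto split: if_splits)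
  then have "\<pi> q \<in> greedy_prefix E \<pi> (Suc q)" "E (\<pi> q) v1"
    using unblocked_joins_prefix[OF assms(1)] sym_E by auto
  then have "\<not> unblocked \<pi> (Suc q) v1" unfolding unblocked_def by blast
  then show ?thesis unfolding mids_def by simp
qed

lemma mids_Suc_placed_end:
  assumes "1 \<le> q" "\<pi> q \<in> ends \<pi> q a"
  shows "a \<notin> mids \<pi> (Suc q)"
proof -
  have "unblocked \<pi> q (\<pi> q)" "E a (\<pi> q)" using assms(2) unfolding ends_def by auto
  then have "\<pi> q \<in> greedy_prefix E \<pi> (Suc q)" "E (\<pi> q) a"
    using unblocked_joins_prefix[OF assms(1)] sym_E by auto
  then have "\<not> unblocked \<pi> (Suc q) a" unfolding unblocked_def by blast
  then show ?thesis unfolding mids_def by (auto split: if_splits)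
qed

lemma potential_nonneg: "0 \<le> potential r \<pi> q"
  unfolding potential_def by (simp add: sum_nonneg max_decay_nonneg)

lemma potential_Suc_le: "potential r \<pi> (Suc q) \<le> potential r \<pi> q"
proof -
  have "potential r \<pi> (Suc q) \<le> (\<Sum>a\<in>mids \<pi> (Suc q). max_decay (card V) r (card (ends \<pi> q a)))"
    unfolding potential_def
    by (intro sum_mono max_decay_mono card_mono[OF finite_ends ends_Suc_subset])
  also have "\<dots> \<le> potential r \<pi> q"
    unfolding potential_def by (intro sum_mono2[OF finite_mids mids_Suc_subset]) (simp add: max_decay_nonneg)
  finally show ?thesis .
qed

lemma potential_le:
  assumes "card V > 0" "r \<ge> 1"
  shows "potential r \<pi> q \<le> card (mids \<pi> q) * (card V / (exp 1 * r))"
proof -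
  have "potential r \<pi> q \<le> (\<Sum>a\<in>mids \<pi> q. card V / (exp 1 * r))"
    unfolding potential_def using assms card_ends_le by (intro sum_mono max_decay_le) auto
  then show ?thesis by simp
qed

end

context path_candidates
begin

lemma mean_mids_le:
  assumes \<pi>: "\<pi> \<in> Omega" and q: "q \<in> {1..card V}" "q \<notin> S"
  shows "(\<Sum>x\<in>unused \<pi> {1..<q}. max_decay (card V) r (card (mids (\<pi>(q := x)) (Suc q))))
           / card (unused \<pi> {1..<q})
       \<le> max_decay (card V) (Suc r) (card (mids \<pi> q))"
proof -
  define P K k where "P = unused \<pi> {1..<q}" and "K = mids \<pi> q" and "k = card K"
  let ?h = "max_decay (card V) r"
  have "\<pi> q \<in> P" unfolding P_def by (rule free_position_unused[OF \<pi> q]) (use q in auto)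
  then have P_pos: "0 < card P" unfolding P_def using finite_unused card_gt_0_iff by blast
  have K_P: "K \<subseteq> P" unfolding K_def P_def by (rule mids_subset_unused)
  then have k_le: "k \<le> card P" unfolding k_def P_def by (rule card_mono[OF finite_unused])
  have placed: "?h (card (mids (\<pi>(q := x)) (Suc q))) \<le> (if x \<in> K then 0 else ?h k)" for x
  proof -
    have K_x: "mids (\<pi>(q := x)) q = K" unfolding K_def by (rule mids_cong) simp
    show ?thesis
    proof (cases "x \<in> K")
      case True
      then show ?thesis using mids_Suc_placed_mid[of q "\<pi>(q := x)"] K_x q by simp
    next
      case False
      have "card (mids (\<pi>(q := x)) (Suc q)) \<le> k"
        using card_mono[OF finite_mids mids_Suc_subset[of "\<pi>(q := x)" q]] K_x k_def by simp
      then show ?thesis using False by (simp add: max_decay_mono)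
    qed
  qed
  have "(\<Sum>x\<in>P. ?h (card (mids (\<pi>(q := x)) (Suc q)))) \<le> (\<Sum>x\<in>P. if x \<in> K then 0 else ?h k)"
    by (intro sum_mono placed)
  also have "\<dots> = (card P - k) * ?h k"
    unfolding k_def using finite_unused K_P P_def by (intro sum_if_mem_zero) auto
  finally have "(\<Sum>x\<in>P. ?h (card (mids (\<pi>(q := x)) (Suc q)))) / card P \<le> (card P - k) * ?h k / card P"
    by (rule divide_right_mono) simp
  also have "\<dots> = real (card P - k) / card P * ?h k" by simp
  also have "\<dots> \<le> (1 - k / card V) * ?h k"
    using k_le P_pos card_unused_le[of \<pi> "{1..<q}"] unfolding P_def
    by (intro mult_right_mono remaining_fraction_le max_decay_nonneg) auto
  also have "\<dots> \<le> max_decay (card V) (Suc r) k"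
    unfolding k_def K_def by (intro max_decay_Suc_ge card_mids_le)
  finally show ?thesis unfolding P_def k_def K_def .
qed

lemma sum_psi_mids_step:
  assumes q: "q \<in> {1..card V}" "q \<notin> S" and "g \<ge> 0" "c \<ge> 0"
  shows "(\<Sum>\<pi>\<in>Omega. psi g (c * max_decay (card V) r (card (mids \<pi> (Suc q)))))
       \<le> (\<Sum>\<pi>\<in>Omega. psi g (c * max_decay (card V) (Suc r) (card (mids \<pi> q))))"
proof (rule sum_psi_free_position_le[OF q \<open>g \<ge> 0\<close>])
  fix \<pi> \<pi>' :: "nat \<Rightarrow> nat"
  assume "\<And>i. i \<in> {1..q} \<Longrightarrow> \<pi> i = \<pi>' i"
  then show "c * max_decay (card V) r (card (mids \<pi> (Suc q))) = c * max_decay (card V) r (card (mids \<pi>' (Suc q)))"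
    using mids_cong[of "Suc q" \<pi> \<pi>'] by auto
next
  fix \<pi> assume \<pi>: "\<pi> \<in> Omega"
  show "(\<Sum>x\<in>unused \<pi> {1..<q}. c * max_decay (card V) r (card (mids (\<pi>(q := x)) (Suc q))))
          / card (unused \<pi> {1..<q})
      \<le> c * max_decay (card V) (Suc r) (card (mids \<pi> q))"
    using mult_left_mono[OF mean_mids_le[OF \<pi> q] \<open>c \<ge> 0\<close>]
    by (simp add: sum_distrib_left[symmetric])
qed (use \<open>c \<ge> 0\<close> max_decay_nonneg in auto)

end

context path_candidates
begin

lemma potential_placed_le:
  assumes "1 \<le> q"
  shows "potential r (\<pi>(q := x)) (Suc q)
       \<le> (\<Sum>a\<in>mids \<pi> q. if x \<in> mids \<pi> q \<union> ends \<pi> q a then 0 else max_decay (card V) r (card (ends \<pi> q a)))"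
proof -
  define \<pi>' where "\<pi>' = \<pi>(q := x)"
  let ?f = "\<lambda>a. max_decay (card V) r (card (ends \<pi> q a))"
  have mids_q: "mids \<pi>' q = mids \<pi> q" unfolding \<pi>'_def by (rule mids_cong) simp
  have ends_q: "ends \<pi>' q a = ends \<pi> q a" for a unfolding \<pi>'_def by (rule ends_cong) simp
  have survivors: "mids \<pi>' (Suc q) \<subseteq> {a \<in> mids \<pi> q. x \<notin> mids \<pi> q \<union> ends \<pi> q a}"
  proof
    fix a assume a: "a \<in> mids \<pi>' (Suc q)"
    then have "a \<in> mids \<pi> q" using mids_Suc_subset mids_q by blast
    moreover have "x \<notin> mids \<pi> q" using a mids_Suc_placed_mid[OF assms, of \<pi>'] mids_q by (auto simp: \<pi>'_def)
    moreover have "x \<notin> ends \<pi> q a" using a mids_Suc_placed_end[OF assms, of \<pi>'] ends_q by (auto simp: \<pi>'_def)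
    ultimately show "a \<in> {a \<in> mids \<pi> q. x \<notin> mids \<pi> q \<union> ends \<pi> q a}" by simp
  qed
  have "potential r \<pi>' (Suc q) \<le> (\<Sum>a\<in>mids \<pi>' (Suc q). ?f a)"
    unfolding potential_def
    by (intro sum_mono max_decay_mono card_mono[OF finite_ends]) (metis ends_Suc_subset ends_q)
  also have "\<dots> \<le> (\<Sum>a\<in>{a \<in> mids \<pi> q. x \<notin> mids \<pi> q \<union> ends \<pi> q a}. ?f a)"
    using survivors finite_mids by (intro sum_mono2) (auto simp: max_decay_nonneg)
  also have "\<dots> = (\<Sum>a\<in>mids \<pi> q. if x \<in> mids \<pi> q \<union> ends \<pi> q a then 0 else ?f a)"
    unfolding sum.inter_filter[OF finite_mids] by (intro sum.cong) auto
  finally show ?thesis unfolding \<pi>'_def .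
qed

lemma sum_potential_placed_le:
  assumes "1 \<le> q"
  shows "(\<Sum>x\<in>unused \<pi> {1..<q}. potential r (\<pi>(q := x)) (Suc q))
       \<le> (\<Sum>a\<in>mids \<pi> q. (card (unused \<pi> {1..<q}) - (card (mids \<pi> q) + card (ends \<pi> q a)))
              * max_decay (card V) r (card (ends \<pi> q a)))"
proof -
  define P K where "P = unused \<pi> {1..<q}" and "K = mids \<pi> q"
  let ?f = "\<lambda>a. max_decay (card V) r (card (ends \<pi> q a))"
  have K_L: "K \<union> ends \<pi> q a \<subseteq> P" "card (K \<union> ends \<pi> q a) = card K + card (ends \<pi> q a)" for a
    unfolding P_def K_def using mids_subset_unused ends_subset_unused
    by (auto intro: card_Un_disjoint[OF finite_mids finite_ends mids_ends_disjoint])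
  have "(\<Sum>x\<in>P. potential r (\<pi>(q := x)) (Suc q)) \<le> (\<Sum>x\<in>P. \<Sum>a\<in>K. if x \<in> K \<union> ends \<pi> q a then 0 else ?f a)"
    unfolding K_def using assms by (intro sum_mono potential_placed_le)
  also have "\<dots> = (\<Sum>a\<in>K. \<Sum>x\<in>P. if x \<in> K \<union> ends \<pi> q a then 0 else ?f a)"
    by (rule sum.swap)
  also have "\<dots> = (\<Sum>a\<in>K. (card P - card (K \<union> ends \<pi> q a)) * ?f a)"
    using K_L(1) finite_unused[of \<pi> "{1..<q}"] unfolding P_def by (intro sum.cong refl sum_if_mem_zero) auto
  finally show ?thesis using K_L(2) unfolding P_def K_def by simp
qed

lemma mean_potential_le:
  assumes \<pi>: "\<pi> \<in> Omega" and q: "q \<in> {1..card V}" "q \<notin> S"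
  shows "(\<Sum>x\<in>unused \<pi> {1..<q}. potential r (\<pi>(q := x)) (Suc q)) / card (unused \<pi> {1..<q})
       \<le> (1 - card (mids \<pi> q) / card V) * potential (Suc r) \<pi> q"
proof -
  define P K k n where "P = unused \<pi> {1..<q}" and "K = mids \<pi> q" and "k = card K" and "n = card V"
  let ?f = "\<lambda>a. max_decay n r (card (ends \<pi> q a))"
  have "\<pi> q \<in> P" unfolding P_def by (rule free_position_unused[OF \<pi> q]) (use q in auto)
  then have P_pos: "0 < card P" unfolding P_def using finite_unused card_gt_0_iff by blast
  have "n > 0" using q n_def by simp
  have "(\<Sum>x\<in>P. potential r (\<pi>(q := x)) (Suc q)) / card P
      \<le> (\<Sum>a\<in>K. (card P - (k + card (ends \<pi> q a))) * ?f a) / card P"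
    using sum_potential_placed_le[of q r \<pi>] q unfolding P_def K_def k_def n_def
    by (intro divide_right_mono) auto
  also have "\<dots> = (\<Sum>a\<in>K. real (card P - (k + card (ends \<pi> q a))) / card P * ?f a)"
    by (simp add: sum_divide_distrib)
  also have "\<dots> \<le> (\<Sum>a\<in>K. (1 - k / n) * max_decay n (Suc r) (card (ends \<pi> q a)))"
  proof (intro sum_mono)
    fix a
    let ?l = "card (ends \<pi> q a)"
    have "K \<union> ends \<pi> q a \<subseteq> P" unfolding P_def K_def using mids_subset_unused ends_subset_unused by auto
    then have "k + ?l \<le> card P"
      using card_mono[OF finite_unused] card_Un_disjoint[OF finite_mids finite_ends mids_ends_disjoint]
      unfolding P_def K_def k_def by metis
    then have "real (card P - (k + ?l)) / card P * ?f a \<le> ((1 - k / n) * (1 - ?l / n)) * ?f a"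
      using P_pos card_unused_le unfolding P_def n_def
      by (intro mult_right_mono remaining_fraction_product_le max_decay_nonneg) auto
    also have "\<dots> = (1 - k / n) * ((1 - ?l / n) * ?f a)" by simp
    also have "\<dots> \<le> (1 - k / n) * max_decay n (Suc r) ?l"
      using card_mids_le card_ends_le \<open>n > 0\<close> unfolding k_def K_def n_def
      by (intro mult_left_mono max_decay_Suc_ge) (auto simp: divide_le_eq)
    finally show "real (card P - (k + ?l)) / card P * ?f a \<le> (1 - k / n) * max_decay n (Suc r) ?l" .
  qed
  also have "\<dots> = (1 - k / n) * potential (Suc r) \<pi> q"
    unfolding potential_def K_def n_def by (simp add: sum_distrib_left)
  finally show ?thesis unfolding P_def k_def K_def n_def .
qed

text \<open>Since \<open>potential (Suc r) \<pi> q \<le> card (mids \<pi> q) * card V / (e * Suc r)\<close>, killing a fraction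
  \<open>card (mids \<pi> q) / card V\<close> of the potential removes at least a multiple of its square.\<close>

lemma potential_shrink_le:
  assumes "card V > 0"
  shows "(1 - card (mids \<pi> q) / card V) * potential (Suc r) \<pi> q
       \<le> potential (Suc r) \<pi> q - exp 1 * Suc r / (card V)^2 * (potential (Suc r) \<pi> q)^2"
proof -
  define Y where "Y = potential (Suc r) \<pi> q"
  define A N where "A = exp 1 * Suc r" and "N = real (card V)"
  have "A > 0" "N > 0" using assms unfolding A_def N_def by auto
  have "Y \<le> card (mids \<pi> q) * (N / A)"
    unfolding Y_def A_def N_def using potential_le[OF assms(1), of "Suc r"] by simp
  then have "A / N^2 * Y * Y \<le> A / N^2 * Y * (card (mids \<pi> q) * (N / A))"
    using potential_nonneg \<open>A > 0\<close> unfolding Y_def by (intro mult_left_mono) auto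
  also have "\<dots> = card (mids \<pi> q) / N * Y"
    using \<open>A > 0\<close> \<open>N > 0\<close> by (simp add: field_simps power2_eq_square)
  finally show ?thesis unfolding A_def N_def Y_def by (simp add: algebra_simps power2_eq_square)
qed

lemma sum_psi_potential_step:
  assumes q: "q \<in> {1..card V}" "q \<notin> S" and "g \<ge> 0"
  shows "(\<Sum>\<pi>\<in>Omega. psi g (potential r \<pi> (Suc q)))
       \<le> (\<Sum>\<pi>\<in>Omega. psi (g + exp 1 * Suc r / (card V)^2) (potential (Suc r) \<pi> q))"
proof -
  define \<delta> where "\<delta> = exp 1 * Suc r / (card V)^2"
  let ?B = "\<lambda>\<pi>. potential (Suc r) \<pi> q - \<delta> * (potential (Suc r) \<pi> q)^2"
  have "card V > 0" using q by auto
  have "(\<Sum>\<pi>\<in>Omega. psi g (potential r \<pi> (Suc q))) \<le> (\<Sum>\<pi>\<in>Omega. psi g (?B \<pi>))"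
  proof (rule sum_psi_free_position_le[OF q \<open>g \<ge> 0\<close>])
    fix \<pi> assume \<pi>: "\<pi> \<in> Omega"
    show "(\<Sum>x\<in>unused \<pi> {1..<q}. potential r (\<pi>(q := x)) (Suc q)) / card (unused \<pi> {1..<q}) \<le> ?B \<pi>"
      using mean_potential_le[OF \<pi> q] potential_shrink_le[OF \<open>card V > 0\<close>] unfolding \<delta>_def
      by (meson order_trans)
  qed (auto intro: potential_cong potential_nonneg)
  also have "\<dots> \<le> (\<Sum>\<pi>\<in>Omega. psi (g + \<delta>) (potential (Suc r) \<pi> q))"
  proof (rule sum_mono)
    fix \<pi>
    have "0 \<le> (1 - card (mids \<pi> q) / card V) * potential (Suc r) \<pi> q"
      using card_mids_le \<open>card V > 0\<close> by (intro mult_nonneg_nonneg potential_nonneg) (auto simp: divide_le_eq)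
    then have "0 \<le> ?B \<pi>" using potential_shrink_le[OF \<open>card V > 0\<close>] unfolding \<delta>_def by (meson order_trans)
    then show "psi g (?B \<pi>) \<le> psi (g + \<delta>) (potential (Suc r) \<pi> q)"
      using \<open>g \<ge> 0\<close> potential_nonneg unfolding \<delta>_def by (intro psi_absorb_quadratic) auto
  qed
  finally show ?thesis unfolding \<delta>_def .
qed

end

context path_candidates
begin

definition free_count :: "nat \<Rightarrow> nat \<Rightarrow> nat" where
  "free_count q b = card {i \<in> {q..b}. i \<notin> S}"

lemma free_count_free: "q \<notin> S \<Longrightarrow> q \<le> b \<Longrightarrow> free_count q b = Suc (free_count (Suc q) b)"
proof -
  assume "q \<notin> S" "q \<le> b"
  then have "{i \<in> {q..b}. i \<notin> S} = insert q {i \<in> {Suc q..b}. i \<notin> S}" by auto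
  then show ?thesis unfolding free_count_def by simp
qed

lemma free_count_fixed: "q \<in> S \<Longrightarrow> free_count q b = free_count (Suc q) b"
proof -
  assume "q \<in> S"
  then have "{i \<in> {q..b}. i \<notin> S} = {i \<in> {Suc q..b}. i \<notin> S}" by (auto simp: le_less Suc_le_eq)
  then show ?thesis unfolding free_count_def by simp
qed

lemma free_count_empty [simp]: "free_count (Suc b) b = 0"
  unfolding free_count_def by simp

lemma card_le_free_count: "P \<subseteq> {q..b} \<Longrightarrow> P \<inter> S = {} \<Longrightarrow> card P \<le> free_count q b"
  unfolding free_count_def by (rule card_mono) auto

text \<open>\<open>gamma r = (\<Sum>s<r. exp 1 * Suc s / (card V)\<^sup>2)\<close> collects the parameters added by
  \<open>r\<close> potential steps.\<close>

definition gamma :: "nat \<Rightarrow> real" where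
  "gamma r = exp 1 * r * Suc r / (2 * (card V)^2)"

lemma gamma_Suc: "gamma (Suc r) = gamma r + exp 1 * Suc r / (card V)^2"
  by (cases "card V = 0") (simp_all add: gamma_def field_simps)

lemma gamma_nonneg: "gamma r \<ge> 0"
  unfolding gamma_def by simp

lemma sum_psi_mids_phase:
  fixes g c :: real
  assumes "qA \<le> card V" "g \<ge> 0" "c \<ge> 0"
  shows "(\<Sum>\<pi>\<in>Omega. psi g (c * card (mids \<pi> (Suc qA))))
       \<le> (\<Sum>\<pi>\<in>Omega. psi g (c * max_decay (card V) (free_count 1 qA) (card (mids \<pi> 1))))"
proof -
  define f where "f q = (\<Sum>\<pi>\<in>Omega. psi g (c * max_decay (card V) (free_count q qA) (card (mids \<pi> q))))" for q
  have one_step: "f (Suc q) \<le> f q" if "1 \<le> q" "q \<le> qA" for q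
  proof (cases "q \<in> S")
    case True
    have "card (mids \<pi> (Suc q)) \<le> card (mids \<pi> q)" for \<pi>
      by (rule card_mono[OF finite_mids mids_Suc_subset])
    then show ?thesis unfolding f_def free_count_fixed[OF True]
      using assms(2,3) by (intro sum_mono psi_mono mult_left_mono max_decay_mono)
        (auto intro: mult_nonneg_nonneg max_decay_nonneg)
  next
    case False
    then show ?thesis unfolding f_def free_count_free[OF False \<open>q \<le> qA\<close>]
      using that assms by (intro sum_psi_mids_step) auto
  qed
  have "f (Suc qA) \<le> f q" if "1 \<le> q" "q \<le> Suc qA" for q
    using that(2)
  proof (induction rule: inc_induct)
    case (step m)
    then show ?case using one_step[of m] \<open>1 \<le> q\<close> by linarith
  qed simp
  then show ?thesis unfolding f_def by simp
qed

lemma sum_psi_potential_phase: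
  assumes "1 \<le> m" "m \<le> Suc t2" "t2 \<le> card V"
  shows "(\<Sum>\<pi>\<in>Omega. potential 0 \<pi> (Suc t2))
       \<le> (\<Sum>\<pi>\<in>Omega. psi (gamma (free_count m t2)) (potential (free_count m t2) \<pi> m))"
proof -
  define f where "f q = (\<Sum>\<pi>\<in>Omega. psi (gamma (free_count q t2)) (potential (free_count q t2) \<pi> q))" for q
  have one_step: "f (Suc q) \<le> f q" if "m \<le> q" "q \<le> t2" for q
  proof (cases "q \<in> S")
    case True
    then show ?thesis unfolding f_def free_count_fixed[OF True]
      by (intro sum_mono psi_mono gamma_nonneg potential_nonneg potential_Suc_le)
  next
    case False
    then show ?thesis unfolding f_def free_count_free[OF False \<open>q \<le> t2\<close>] gamma_Suc
      using that assms by (intro sum_psi_potential_step gamma_nonneg) auto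
  qed
  have "f (Suc t2) \<le> f q" if "m \<le> q" "q \<le> Suc t2" for q
    using that(2)
  proof (induction rule: inc_induct)
    case (step k)
    then show ?case using one_step[of k] \<open>m \<le> q\<close> by linarith
  qed simp
  then show ?thesis using assms(2) unfolding f_def by (simp add: gamma_def)
qed

lemma sum_potential_le:
  assumes "1 \<le> qA" "qA < t2" "t2 \<le> card V"
    and "free_count 1 qA \<ge> 1" "free_count (Suc qA) t2 \<ge> 1"
  shows "(\<Sum>\<pi>\<in>Omega. potential 0 \<pi> (Suc t2))
       \<le> card Omega * psi (gamma (free_count (Suc qA) t2))
            (card V / (exp 1 * free_count (Suc qA) t2) * (card V / (exp 1 * free_count 1 qA)))"
proof -
  define sa sb where "sa = free_count 1 qA" and "sb = free_count (Suc qA) t2"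
  define g c where "g = gamma sb" and "c = card V / (exp 1 * sb)"
  have "g \<ge> 0" "c \<ge> 0" "card V > 0" using assms unfolding g_def c_def by (auto simp: gamma_nonneg)
  have "(\<Sum>\<pi>\<in>Omega. potential 0 \<pi> (Suc t2)) \<le> (\<Sum>\<pi>\<in>Omega. psi g (potential sb \<pi> (Suc qA)))"
    unfolding g_def sb_def using assms by (intro sum_psi_potential_phase) auto
  also have "\<dots> \<le> (\<Sum>\<pi>\<in>Omega. psi g (c * card (mids \<pi> (Suc qA))))"
  proof (intro sum_mono psi_mono potential_nonneg \<open>g \<ge> 0\<close>)
    fix \<pi>
    show "potential sb \<pi> (Suc qA) \<le> c * card (mids \<pi> (Suc qA))"
      using potential_le[OF \<open>card V > 0\<close>, of sb \<pi> "Suc qA"] assms(5) unfolding c_def sb_def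
      by (simp add: ac_simps)
  qed
  also have "\<dots> \<le> (\<Sum>\<pi>\<in>Omega. psi g (c * max_decay (card V) sa (card (mids \<pi> 1))))"
    unfolding sa_def by (rule sum_psi_mids_phase) (use assms \<open>g \<ge> 0\<close> \<open>c \<ge> 0\<close> in auto)
  also have "\<dots> \<le> (\<Sum>\<pi>\<in>Omega. psi g (c * (card V / (exp 1 * sa))))"
    using \<open>g \<ge> 0\<close> \<open>c \<ge> 0\<close> \<open>card V > 0\<close> assms(4) card_mids_le unfolding sa_def
    by (intro sum_mono psi_mono mult_left_mono max_decay_le mult_nonneg_nonneg max_decay_nonneg) auto
  finally show ?thesis unfolding g_def c_def sa_def sb_def by simp
qed

end

section \<open>From dependency paths to candidate pairs\<close>

lemma inhib_position_le:
  assumes "j \<in> {1..n}" "\<pi> j \<in> greedy_mis E n \<pi>" "E (\<pi> j) v"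
  shows "\<exists>p\<in>{1..j}. inhib E n \<pi> v = \<pi> p"
proof -
  let ?P = "\<lambda>q. q \<in> {1..n} \<and> \<pi> q \<in> greedy_mis E n \<pi> \<and> E (\<pi> q) v"
  have "?P j" using assms by simp
  then have "?P (LEAST q. ?P q)" "(LEAST q. ?P q) \<le> j" by (rule LeastI, rule Least_le)
  then show ?thesis unfolding inhib_def by auto
qed

context path_candidates
begin

lemma dep_path_imp_candidates:
  assumes \<pi>: "\<pi> \<in> Omega" and \<pi>': "\<pi>' \<in> orderings V"
    and agree: "\<forall>i\<in>S \<union> {1..t2} \<union> {p2, p3}. \<pi>' i = \<pi> i"
    and path: "dep_path E (card V) \<pi>' p1 p2 p3"
    and pos: "t2 < p1" "p3 \<le> card V" "p1 \<in> S" "p2 \<notin> S" "p3 \<notin> S"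
  shows "\<pi> p2 \<in> mids \<pi> (Suc t2) \<and> \<pi> p3 \<in> ends \<pi> (Suc t2) (\<pi> p2)"
proof -
  define M where "M = greedy_mis E (card V) \<pi>'"
  from path have p: "p1 < p2" "p2 < p3" "E (\<pi>' p1) (\<pi>' p2)" "E (\<pi>' p2) (\<pi>' p3)" "\<pi>' p1 \<in> M"
    "\<pi>' p3 \<in> M" "\<pi>' p1 = inhib E (card V) \<pi>' (\<pi>' p2)"
    unfolding dep_path_def M_def by auto
  have indep: "\<forall>u\<in>M. \<forall>w\<in>M. \<not> E u w"
    unfolding M_def greedy_mis_def by (rule greedy_aux_independent[OF sym_E irrefl_E]) simp
  have inj': "inj_on \<pi>' {1..card V}" using \<pi>' unfolding orderings_def bij_betw_def by auto
  have v1: "v1 = \<pi>' p1" and same: "\<pi> p2 = \<pi>' p2" "\<pi> p3 = \<pi>' p3"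
    using agree OmegaD(4)[OF \<pi> pos(3)] pos(3) unfolding v1_def by auto
  have prefix: "greedy_prefix E \<pi> (Suc t2) = greedy_prefix E \<pi>' (Suc t2)"
    by (rule greedy_prefix_cong) (use agree in auto)
  have prefix_M: "greedy_prefix E \<pi> (Suc t2) \<subseteq> M"
    unfolding prefix M_def greedy_mis_eq_prefix using p pos by (intro greedy_prefix_mono) simp
  have "unblocked \<pi> (Suc t2) v1" "unblocked \<pi> (Suc t2) (\<pi> p3)" "\<not> E v1 (\<pi> p3)"
    using prefix_M indep p(5,6) unfolding unblocked_def v1 same by blast+
  moreover have "unblocked \<pi> (Suc t2) (\<pi> p2)"
    unfolding unblocked_def
  proof (intro ballI notI)
    fix w assume w: "w \<in> greedy_prefix E \<pi> (Suc t2)" and "E w (\<pi> p2)"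
    have "w \<in> \<pi>' ` {1..t2}"
      using w greedy_prefix_subset_image[of E \<pi>' "Suc t2"] unfolding prefix
      by (auto simp: atLeastLessThanSuc_atLeastAtMost)
    then obtain j where j: "j \<in> {1..t2}" "w = \<pi>' j" by blast
    have "j \<in> {1..card V}" using j pos p by auto
    moreover have "\<pi>' j \<in> M" "E (\<pi>' j) (\<pi>' p2)" using prefix_M w j \<open>E w (\<pi> p2)\<close> same by auto
    ultimately obtain p where "p \<in> {1..j}" "\<pi>' p1 = \<pi>' p"
      using inhib_position_le[of j "card V" \<pi>' E "\<pi>' p2"] p(7) unfolding M_def by auto
    then show False using inj' j pos p by (auto dest: inj_onD)
  qed
  moreover have "\<pi> p2 \<in> unused \<pi> {1..<Suc t2}" "\<pi> p3 \<in> unused \<pi> {1..<Suc t2}"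
    using pos p by (auto intro: free_position_unused[OF \<pi>])
  ultimately show ?thesis using p(3,4) unfolding mids_def ends_def v1 same by simp
qed

end

context path_candidates
begin

lemma card_candidate_event_le:
  assumes pos: "t2 < p2" "p2 < p3" "p3 \<le> card V" "p3 \<notin> S"
    and m: "0 < m" "\<And>\<pi>. \<pi> \<in> Omega \<Longrightarrow> m \<le> card (unused \<pi> ({1..<Suc t2} \<union> {p2}))"
  shows "card {\<pi> \<in> Omega. \<pi> p2 \<in> mids \<pi> (Suc t2) \<and> \<pi> p3 \<in> ends \<pi> (Suc t2) (\<pi> p2)}
       \<le> (\<Sum>\<pi>\<in>Omega. if \<pi> p2 \<in> mids \<pi> (Suc t2) then real (card (ends \<pi> (Suc t2) (\<pi> p2))) else 0) / m"
proof -
  define J where "J = {1..<Suc t2} \<union> {p2}"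
  define G where "G \<pi> z = (if \<pi> p2 \<in> mids \<pi> (Suc t2) \<and> z \<in> ends \<pi> (Suc t2) (\<pi> p2) then 1 else 0 :: real)"
    for \<pi> z
  define H where "H \<pi> = (if \<pi> p2 \<in> mids \<pi> (Suc t2) then real (card (ends \<pi> (Suc t2) (\<pi> p2))) else 0)" for \<pi>
  have "card {\<pi> \<in> Omega. \<pi> p2 \<in> mids \<pi> (Suc t2) \<and> \<pi> p3 \<in> ends \<pi> (Suc t2) (\<pi> p2)} = (\<Sum>\<pi>\<in>Omega. G \<pi> (\<pi> p3))"
    unfolding G_def using sum.inter_filter[OF finite_Omega, of "\<lambda>_. 1::real"] by simp
  also have "\<dots> = (\<Sum>\<pi>\<in>Omega. (\<Sum>z\<in>unused \<pi> J. G \<pi> z) / card (unused \<pi> J))"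
  proof (rule sum_Omega_free_position)
    fix \<pi> \<pi>' :: "nat \<Rightarrow> nat" and z
    assume "\<And>i. i \<in> J \<Longrightarrow> \<pi> i = \<pi>' i"
    then have "\<And>i. i \<in> {1..<Suc t2} \<Longrightarrow> \<pi> i = \<pi>' i" "\<pi> p2 = \<pi>' p2" unfolding J_def by auto
    then show "G \<pi> z = G \<pi>' z" unfolding G_def using mids_cong ends_cong by metis
  qed (use pos in \<open>auto simp: J_def\<close>)
  also have "\<dots> \<le> (\<Sum>\<pi>\<in>Omega. H \<pi> / m)"
  proof (rule sum_mono)
    fix \<pi> assume \<pi>: "\<pi> \<in> Omega"
    have "(\<Sum>z\<in>unused \<pi> J. G \<pi> z) = card (unused \<pi> J \<inter> ends \<pi> (Suc t2) (\<pi> p2))"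
      if "\<pi> p2 \<in> mids \<pi> (Suc t2)"
      using that sum.inter_restrict[OF finite_unused, of "\<lambda>_. 1::real" \<pi> J] unfolding G_def by simp
    then have "(\<Sum>z\<in>unused \<pi> J. G \<pi> z) \<le> H \<pi>"
      unfolding G_def H_def by (auto intro: card_mono[OF finite_ends])
    moreover have "0 \<le> H \<pi>" unfolding H_def by simp
    ultimately show "(\<Sum>z\<in>unused \<pi> J. G \<pi> z) / card (unused \<pi> J) \<le> H \<pi> / m"
      using m(1) m(2)[OF \<pi>] unfolding J_def by (intro frac_le) auto
  qed
  finally show ?thesis unfolding H_def by (simp add: sum_divide_distrib)
qed

lemma sum_ends_le_potential:
  assumes pos: "t2 < p2" "p2 \<le> card V" "p2 \<notin> S"
    and m: "0 < m" "\<And>\<pi>. \<pi> \<in> Omega \<Longrightarrow> m \<le> card (unused \<pi> {1..<Suc t2})"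
  shows "(\<Sum>\<pi>\<in>Omega. if \<pi> p2 \<in> mids \<pi> (Suc t2) then real (card (ends \<pi> (Suc t2) (\<pi> p2))) else 0)
       \<le> (\<Sum>\<pi>\<in>Omega. potential 0 \<pi> (Suc t2)) / m"
proof -
  define J where "J = {1..<Suc t2}"
  define G where "G \<pi> z = (if z \<in> mids \<pi> (Suc t2) then real (card (ends \<pi> (Suc t2) z)) else 0)" for \<pi> z
  have "(\<Sum>\<pi>\<in>Omega. G \<pi> (\<pi> p2)) = (\<Sum>\<pi>\<in>Omega. (\<Sum>z\<in>unused \<pi> J. G \<pi> z) / card (unused \<pi> J))"
  proof (rule sum_Omega_free_position)
    fix \<pi> \<pi>' :: "nat \<Rightarrow> nat" and z
    assume "\<And>i. i \<in> J \<Longrightarrow> \<pi> i = \<pi>' i"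
    then show "G \<pi> z = G \<pi>' z" unfolding G_def J_def using mids_cong ends_cong by metis
  qed (use pos in \<open>auto simp: J_def\<close>)
  also have "\<dots> \<le> (\<Sum>\<pi>\<in>Omega. potential 0 \<pi> (Suc t2) / m)"
  proof (rule sum_mono)
    fix \<pi> assume \<pi>: "\<pi> \<in> Omega"
    have "(\<Sum>z\<in>unused \<pi> J. G \<pi> z) = potential 0 \<pi> (Suc t2)"
      using mids_subset_unused[of \<pi> "Suc t2"] finite_unused
      unfolding G_def potential_def J_def by (simp add: sum.If_cases Int_absorb1)
    then show "(\<Sum>z\<in>unused \<pi> J. G \<pi> z) / card (unused \<pi> J) \<le> potential 0 \<pi> (Suc t2) / m"
      using m(1) m(2)[OF \<pi>] potential_nonneg unfolding J_def by (intro frac_le) auto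
  qed
  finally show ?thesis unfolding G_def by (simp add: sum_divide_distrib)
qed

end

context path_candidates
begin

lemma cond_prob_dep_path_le_psi:
  assumes pos: "1 \<le> qA" "qA < t2" "t2 < p1" "p1 < p2" "p2 < p3" "p3 \<le> card V"
    and S: "p1 \<in> S" "p2 \<notin> S" "p3 \<notin> S"
    and m: "0 < m" "m \<le> card V - card ({1..<Suc t2} \<union> {p2} \<union> S)"
    and free: "free_count 1 qA \<ge> 1" "free_count (Suc qA) t2 \<ge> 1"
  shows "cond_prob V
           (\<lambda>\<pi>. \<exists>\<pi>'\<in>orderings V. (\<forall>i\<in>S \<union> {1..t2} \<union> {p2, p3}. \<pi>' i = \<pi> i) \<and> dep_path E (card V) \<pi>' p1 p2 p3)
           (\<lambda>\<pi>. \<forall>i\<in>S. \<pi> i = \<sigma> i)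
       \<le> psi (gamma (free_count (Suc qA) t2))
            (card V / (exp 1 * free_count (Suc qA) t2) * (card V / (exp 1 * free_count 1 qA))) / (real m)^2"
proof -
  let ?A = "\<lambda>\<pi>. \<exists>\<pi>'\<in>orderings V. (\<forall>i\<in>S \<union> {1..t2} \<union> {p2, p3}. \<pi>' i = \<pi> i) \<and> dep_path E (card V) \<pi>' p1 p2 p3"
  let ?bound = "psi (gamma (free_count (Suc qA) t2))
            (card V / (exp 1 * free_count (Suc qA) t2) * (card V / (exp 1 * free_count 1 qA)))"
  let ?Ev = "{\<pi> \<in> Omega. \<pi> p2 \<in> mids \<pi> (Suc t2) \<and> \<pi> p3 \<in> ends \<pi> (Suc t2) (\<pi> p2)}"
  have "finite S" using S_positions finite_subset by blast
  have m_unused: "m \<le> card (unused \<pi> J)" if "\<pi> \<in> Omega" "J \<subseteq> {1..<Suc t2} \<union> {p2}" for \<pi> J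
  proof -
    have "card (J \<union> S) \<le> card ({1..<Suc t2} \<union> {p2} \<union> S)"
      using that(2) \<open>finite S\<close> by (intro card_mono) auto
    then show ?thesis using m(2) card_unused_ge[OF that(1), of J] finite_subset[OF that(2)] by auto
  qed
  have "{\<pi> \<in> Omega. ?A \<pi>} \<subseteq> ?Ev"
    using dep_path_imp_candidates pos S by auto
  then have "card {\<pi> \<in> Omega. ?A \<pi>} \<le> real (card ?Ev)"
    using finite_Omega by (simp add: card_mono)
  also have "\<dots> \<le> (\<Sum>\<pi>\<in>Omega. if \<pi> p2 \<in> mids \<pi> (Suc t2) then real (card (ends \<pi> (Suc t2) (\<pi> p2))) else 0) / m"
    by (rule card_candidate_event_le) (use pos S m(1) m_unused in auto)
  also have "\<dots> \<le> (\<Sum>\<pi>\<in>Omega. potential 0 \<pi> (Suc t2)) / m / m"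
    by (rule divide_right_mono[OF sum_ends_le_potential]) (use pos S m(1) m_unused in auto)
  also have "\<dots> = (\<Sum>\<pi>\<in>Omega. potential 0 \<pi> (Suc t2)) / (real m)^2"
    by (simp add: power2_eq_square)
  also have "\<dots> \<le> card Omega * ?bound / (real m)^2"
    using sum_potential_le[of qA t2] pos free by (intro divide_right_mono) auto
  finally have "card {\<pi> \<in> Omega. ?A \<pi>} \<le> card Omega * ?bound / (real m)^2" .
  moreover have "0 \<le> ?bound" by (intro psi_nonneg gamma_nonneg) simp
  ultimately have "card {\<pi> \<in> Omega. ?A \<pi>} / card Omega \<le> ?bound / (real m)^2"
    by (cases "card Omega = 0") (simp_all add: divide_le_eq mult.commute)
  moreover have "{\<pi> \<in> orderings V. ?A \<pi> \<and> (\<forall>i\<in>S. \<pi> i = \<sigma> i)} = {\<pi> \<in> Omega. ?A \<pi>}"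
    unfolding Omega_def by auto
  ultimately show ?thesis unfolding cond_prob_def Omega_def[symmetric] by simp
qed

end

lemma psi_closed_form:
  fixes e a b N :: real
  assumes "0 < e" "0 < a" "0 < b" "0 < N"
  shows "psi (e * b * (1 + b) / (2 * N^2)) (N / (e * b) * (N / (e * a)))
       = N^2 / (e^2 * a * b + e * b * (b + 1) / 2)"
proof -
  define X g K where "X = N / (e * b) * (N / (e * a))" and "g = e * b * (1 + b) / (2 * N^2)"
    and "K = 2 * e * a + 1 + b"
  have "0 < 2 * e * a" using assms by simp
  then have "0 < K" unfolding K_def using assms by linarith
  have "g * X = (1 + b) / (2 * e * a)"
    unfolding g_def X_def using assms by (simp add: field_simps power2_eq_square)
  then have denom: "1 + g * X = K / (2 * e * a)" unfolding K_def using assms by (simp add: field_simps)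
  have quot: "X / (K / (2 * e * a)) = 2 * N^2 / (e * b * K)"
    unfolding X_def using assms \<open>0 < K\<close> by (simp add: field_simps power2_eq_square)
  have den: "e^2 * a * b + e * b * (b + 1) / 2 = e * b * K / 2"
    unfolding K_def by (simp add: algebra_simps power2_eq_square)
  have rhs: "N^2 / (e^2 * a * b + e * b * (b + 1) / 2) = 2 * N^2 / (e * b * K)"
    unfolding den by (simp add: mult.commute)
  show ?thesis unfolding psi_def g_def[symmetric] X_def[symmetric] denom quot rhs ..
qed

text \<open>The summand \<open>e * b * (b + 1) / 2\<close>, which stems from \<open>gamma\<close>, gains the factor \<open>1 + 1 / (2 * e)\<close>
  over \<open>(e * L)\<^sup>2\<close>; this pays for the loss \<open>(200 / 199)\<^sup>2\<close> in \<open>m\<close> and leaves \<open>\<epsilon> = 1 / 200\<close>.\<close>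

lemma final_ratio_le:
  fixes e N a b L m :: real
  assumes e: "0 < e" "e \<le> 3" and L: "0 < L" "L \<le> a" "L \<le> b" and N: "0 < N" "199/200 * N \<le> m"
  shows "N^2 / (e^2 * a * b + e * b * (b + 1) / 2) / m^2 \<le> (1 - 1/200) / (e * L)^2"
proof -
  define c K where "c = (199/200 :: real)" and "K = L^2 * (e^2 + e / 2)"
  have "K > 0" using e L unfolding K_def by (intro mult_pos_pos add_pos_pos) auto
  have "c > 0" unfolding c_def by simp
  have "L * L \<le> a * b" "L * L \<le> b * (b + 1)" using L by (auto intro: mult_mono)
  then have "e^2 * (L * L) \<le> e^2 * (a * b)" "e * (L * L) \<le> e * (b * (b + 1))"
    using e by (auto intro: mult_left_mono)
  moreover have "K = e^2 * (L * L) + e * (L * L) / 2"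
    unfolding K_def by (simp add: power2_eq_square algebra_simps)
  ultimately have "K \<le> e^2 * a * b + e * b * (b + 1) / 2"
    by (simp add: mult.assoc)
  moreover have "(c * N)^2 \<le> m^2" using N unfolding c_def by (intro power_mono) auto
  ultimately have "K * (c * N)^2 \<le> (e^2 * a * b + e * b * (b + 1) / 2) * m^2"
    using \<open>K > 0\<close> by (intro mult_mono) auto
  then have "N^2 / (e^2 * a * b + e * b * (b + 1) / 2) / m^2 \<le> N^2 / (K * (c * N)^2)"
    using \<open>K > 0\<close> \<open>c > 0\<close> N(1) by (simp add: frac_le)
  also have "\<dots> = 1 / (K * c^2)" using N(1) by (simp add: power_mult_distrib)
  also have "\<dots> \<le> c / (e * L)^2"
  proof -
    have "(1 - c^3) * e \<le> c^3 / 2" using e unfolding c_def by (simp add: power3_eq_cube)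
    then have "(1 - c^3) * e * e \<le> c^3 / 2 * e" using e by (intro mult_right_mono) auto
    then have "e^2 \<le> c^3 * (e^2 + e / 2)" by (simp add: power2_eq_square algebra_simps)
    then have "L^2 * e^2 \<le> L^2 * (c^3 * (e^2 + e / 2))" by (intro mult_left_mono) auto
    also have "\<dots> = c * (K * c^2)" unfolding K_def by (simp add: power3_eq_cube power2_eq_square)
    finally have "(e * L)^2 \<le> c * (K * c^2)" by (simp add: power_mult_distrib mult.commute)
    then show ?thesis using \<open>K > 0\<close> \<open>c > 0\<close> e L by (simp add: divide_simps)
  qed
  finally show ?thesis unfolding c_def by simp
qed

lemma cond_prob_dep_path_le:
  fixes V :: "nat set" and E :: "nat \<Rightarrow> nat \<Rightarrow> bool" and P1 P2 S :: "nat set" and \<sigma> :: "nat \<Rightarrow> nat"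
  assumes "finite V" "\<forall>u v. E u v \<longrightarrow> E v u" "\<forall>v. \<not> E v v" and n: "200 * b \<le> card V"
    and pos: "p1 < p2" "p2 < p3" "p1 \<in> {1..b}" "p3 \<in> {1..b}"
    and P: "P1 \<subseteq> {1..b}" "card P1 = l" "card P2 = l" "l \<ge> 1" "Max P1 < Min P2" "Max P2 < p1"
    and S: "S \<subseteq> {1..b} - (P1 \<union> P2 \<union> {p2, p3})" "p1 \<in> S"
  shows "cond_prob V
           (\<lambda>\<pi>. \<exists>\<pi>'\<in>orderings V. (\<forall>i\<in>S \<union> {1..Max P2} \<union> {p2, p3}. \<pi>' i = \<pi> i) \<and> dep_path E (card V) \<pi>' p1 p2 p3)
           (\<lambda>\<pi>. \<forall>i\<in>S. \<pi> i = \<sigma> i)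
       \<le> (1 - 1/200) / (exp 1 * l)^2"
proof -
  define qA t2 m where "qA = Max P1" and "t2 = Max P2" and "m = card V - b"
  have "b < card V" using n pos by auto
  interpret path_candidates V S \<sigma> E p1
    using assms \<open>b < card V\<close> by unfold_locales auto
  define sa sb where "sa = free_count 1 qA" and "sb = free_count (Suc qA) t2"
  have "finite P1" "finite P2" "P1 \<noteq> {}" "P2 \<noteq> {}" using P by (auto intro: card_ge_0_finite)
  then have "qA \<in> P1" "t2 \<in> P2" "t2 < p1" unfolding qA_def t2_def using P(6) by auto
  have "P1 \<subseteq> {1..qA}" using P(1) Max_ge[OF \<open>finite P1\<close>] unfolding qA_def by auto
  have "P2 \<subseteq> {Suc qA..t2}"
    using P(5) Min_le[OF \<open>finite P2\<close>] Max_ge[OF \<open>finite P2\<close>] unfolding qA_def t2_def by fastforce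
  have order: "1 \<le> qA" "qA < t2"
    using \<open>qA \<in> P1\<close> \<open>t2 \<in> P2\<close> \<open>P1 \<subseteq> {1..qA}\<close> \<open>P2 \<subseteq> {Suc qA..t2}\<close> P(1) by auto
  have "l \<le> sa" unfolding sa_def P(2)[symmetric]
    by (rule card_le_free_count) (use S \<open>P1 \<subseteq> {1..qA}\<close> in auto)
  have "l \<le> sb" unfolding sb_def P(3)[symmetric]
    by (rule card_le_free_count) (use S \<open>P2 \<subseteq> {Suc qA..t2}\<close> in auto)
  have "{1..<Suc t2} \<union> {p2} \<union> S \<subseteq> {1..b}" using pos S \<open>t2 < p1\<close> by auto
  then have "m \<le> card V - card ({1..<Suc t2} \<union> {p2} \<union> S)"
    unfolding m_def using card_mono[of "{1..b}"] by (intro diff_le_mono2) fastforce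
  then have "cond_prob V
           (\<lambda>\<pi>. \<exists>\<pi>'\<in>orderings V. (\<forall>i\<in>S \<union> {1..t2} \<union> {p2, p3}. \<pi>' i = \<pi> i) \<and> dep_path E (card V) \<pi>' p1 p2 p3)
           (\<lambda>\<pi>. \<forall>i\<in>S. \<pi> i = \<sigma> i)
       \<le> psi (gamma sb) (card V / (exp 1 * sb) * (card V / (exp 1 * sa))) / (real m)^2"
    unfolding sa_def sb_def using pos S order \<open>t2 < p1\<close> \<open>l \<le> sa\<close> \<open>l \<le> sb\<close> \<open>b < card V\<close> P(4)
    by (intro cond_prob_dep_path_le_psi) (auto simp: m_def sa_def sb_def)
  also have "\<dots> = (real (card V))^2 / ((exp 1)^2 * sa * sb + exp 1 * sb * (real sb + 1) / 2) / (real m)^2"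
    using psi_closed_form[of "exp 1" sa sb "card V"] \<open>l \<le> sa\<close> \<open>l \<le> sb\<close> P(4) \<open>b < card V\<close>
    unfolding gamma_def by (simp add: add.commute)
  also have "\<dots> \<le> (1 - 1/200) / (exp 1 * l)^2"
    using \<open>l \<le> sa\<close> \<open>l \<le> sb\<close> P(4) \<open>b < card V\<close> n exp_le unfolding m_def
    by (intro final_ratio_le) (auto simp: of_nat_diff)
  finally show ?thesis unfolding t2_def .
qed

theorem lemma2p3:
  shows "\<exists>\<beta> \<epsilon> :: real. 0 < \<beta> \<and> \<beta> < 0.01 \<and> 0 < \<epsilon> \<and> \<epsilon> < 0.01 \<and>
    (\<forall>(V :: nat set) (E :: nat \<Rightarrow> nat \<Rightarrow> bool) p1 p2 p3 (P1 :: nat set) P2 l S (\<sigma> :: nat \<Rightarrow> nat).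
      finite V \<longrightarrow> (\<forall>u v. E u v \<longrightarrow> E v u) \<longrightarrow> (\<forall>v. \<not> E v v) \<longrightarrow>
      (let n = card V; B = {1..nat \<lfloor>\<beta> * real n\<rfloor>} in
        p1 < p2 \<longrightarrow> p2 < p3 \<longrightarrow> p1 \<in> B \<longrightarrow> p2 \<in> B \<longrightarrow> p3 \<in> B \<longrightarrow>
        P1 \<subseteq> B \<longrightarrow> P2 \<subseteq> B \<longrightarrow> P1 \<inter> P2 = {} \<longrightarrow>
        card P1 = l \<longrightarrow> card P2 = l \<longrightarrow> l \<ge> 10000 \<longrightarrow>
        Max P1 < Min P2 \<longrightarrow> Max P2 < p1 \<longrightarrow>
        S \<subseteq> B - (P1 \<union> P2 \<union> {p2, p3}) \<longrightarrow> p1 \<in> S \<longrightarrow>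
        inj_on \<sigma> S \<longrightarrow> \<sigma> ` S \<subseteq> V \<longrightarrow>
        (let t2 = Max P2; S2 = S \<union> {1..t2} \<union> {p2, p3} in
          cond_prob V
            (\<lambda>\<pi>. \<exists>\<pi>' \<in> orderings V. (\<forall>i\<in>S2. \<pi>' i = \<pi> i) \<and> dep_path E n \<pi>' p1 p2 p3)
            (\<lambda>\<pi>. \<forall>i\<in>S. \<pi> i = \<sigma> i)
          \<le> (1 - \<epsilon>) / (exp 1 * real l)\<^sup>2)))"
proof -
  have floor_bound: "200 * nat \<lfloor>1/200 * real n\<rfloor> \<le> n" for n :: nat
  proof -
    have "1/200 * real n = real n / real (200::nat)" by simp
    then have "nat \<lfloor>1/200 * real n\<rfloor> = n div 200" by (simp only: floor_divide_of_nat_eq nat_int)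
    then show ?thesis by simp
  qed
  show ?thesis
    unfolding Let_def
    by (intro exI[of _ "1/200"] conjI allI impI cond_prob_dep_path_le[OF _ _ _ floor_bound]; (assumption | simp))
qed
end
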